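(* Let $(G,c,r)$ be an instance of the metric Many-Visits TSP and let $\alpha\geq1$. Let $T_1$ be a Hamiltonian cycle in $G$ (a single-visit TSP tour) with $c(T_1)\leq\alpha\cdot c(\mathrm{OPT}_1)$, where $\mathrm{OPT}_1$ is an optimal single-visit tour, and let $P\in\mathbb{Z}_{\geq0}^E$ be an optimal solution of the transportation problem with prescriptions $r-1$, i.e. a minimum-cost $P$ with $d_P(v)=2(r(v)-1)$ for all $v\in V$. Then the multigraph $T=T_1+P$ is a feasible solution of the Many-Visits TSP instance $(G,c,r)$, and $c(T)\leq(\alpha+1)\cdot c(\mathrm{OPT}_r)$, where $\mathrm{OPT}_r$ is an optimal Many-Visits TSP solution for $(G,c,r)$.
   Context: $G=(V,E)$ is the complete undirected graph on $n$ vertices with a self-loop at each vertex; $d_x(v)$ is the sum of $x$-values of edges incident to $v$, the self-loop counted twice. Costs $c:E\to\mathbb{R}_{\geq0}$ satisfy the triangle inequality, including $c(vv)\leq 2c(uv)$ for all $u,v$. A feasible Many-Visits TSP solution for requests $r:V\to\mathbb{Z}_{\geq1}$ is $z\in\mathbb{Z}_{\geq0}^E$ with $d_z(v)=2r(v)$ for all $v$ and $(V,\mathrm{supp}(z))$ connected; its cost is $\sum_e c(e)z(e)$. The transportation problem with prescriptions $q:V\to\mathbb{Z}_{\geq0}$ asks for a minimum-cost $z\in\mathbb{Z}_{\geq0}^E$ with $d_z(v)=2q(v)$ for all $v$ (no connectivity). For multigraphs $H_1,H_2$ on $V$, $H_1+H_2$ is the union of their edge multisets. *)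

theory Defs
  imports Complex_Main
begin

text \<open>Edges of the complete graph with a self-loop at each vertex, on the vertex set V:
  an edge is the set {u,v} (a self-loop is the singleton {v}).
  Multigraphs / integer edge vectors are functions x :: 'a set \<Rightarrow> nat, only their
  values on the edges matter.\<close>

definition edges :: "'a set \<Rightarrow> 'a set set" where
  "edges V = {e. \<exists>u\<in>V. \<exists>v\<in>V. e = {u, v}}"

definition deg :: "'a set \<Rightarrow> ('a set \<Rightarrow> nat) \<Rightarrow> 'a \<Rightarrow> nat" where
  "deg V x v = (\<Sum>e\<in>edges V. if v \<in> e then (if e = {v} then 2 else 1) * x e else 0)"

definition cost :: "'a set \<Rightarrow> ('a set \<Rightarrow> real) \<Rightarrow> ('a set \<Rightarrow> nat) \<Rightarrow> real" where
  "cost V c x = (\<Sum>e\<in>edges V. c e * real (x e))"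

text \<open>Metric costs: nonnegative and satisfying the triangle inequality, including for
  self-loops (taking w = u gives c(uu) \<le> 2 c(uv)).\<close>
definition metric_cost :: "'a set \<Rightarrow> ('a set \<Rightarrow> real) \<Rightarrow> bool" where
  "metric_cost V c \<longleftrightarrow> (\<forall>e\<in>edges V. c e \<ge> 0) \<and>
     (\<forall>u\<in>V. \<forall>v\<in>V. \<forall>w\<in>V. c {u, w} \<le> c {u, v} + c {v, w})"

definition supp_connected :: "'a set \<Rightarrow> ('a set \<Rightarrow> nat) \<Rightarrow> bool" where
  "supp_connected V x \<longleftrightarrow>
     (\<forall>u\<in>V. \<forall>v\<in>V. (u, v) \<in> ({(a, b). a \<in> V \<and> b \<in> V \<and> x {a, b} > 0})\<^sup>*)"

definition mvtsp_feasible :: "'a set \<Rightarrow> ('a \<Rightarrow> nat) \<Rightarrow> ('a set \<Rightarrow> nat) \<Rightarrow> bool" where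
  "mvtsp_feasible V r z \<longleftrightarrow> (\<forall>v\<in>V. deg V z v = 2 * r v) \<and> supp_connected V z"

definition mvtsp_opt :: "'a set \<Rightarrow> ('a set \<Rightarrow> real) \<Rightarrow> ('a \<Rightarrow> nat) \<Rightarrow> real" where
  "mvtsp_opt V c r = Inf {cost V c z | z. mvtsp_feasible V r z}"

text \<open>A (single-visit) TSP tour = Hamiltonian cycle = feasible solution with all requests 1.\<close>
definition tsp_tour :: "'a set \<Rightarrow> ('a set \<Rightarrow> nat) \<Rightarrow> bool" where
  "tsp_tour V z \<longleftrightarrow> mvtsp_feasible V (\<lambda>_. 1) z"

definition transport_opt :: "'a set \<Rightarrow> ('a set \<Rightarrow> real) \<Rightarrow> ('a \<Rightarrow> nat) \<Rightarrow> ('a set \<Rightarrow> nat) \<Rightarrow> bool" where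
  "transport_opt V c q P \<longleftrightarrow> (\<forall>v\<in>V. deg V P v = 2 * q v) \<and>
     (\<forall>Q. (\<forall>v\<in>V. deg V Q v = 2 * q v) \<longrightarrow> cost V c P \<le> cost V c Q)"

end

theory Submission
  imports Defs
begin

text \<open>
  \<open>T1 + P\<close> has degree \<open>2 + 2(r v - 1)\<close> at every vertex and contains the connected
  tour \<open>T1\<close>, so it is feasible. Both lower bounds on \<open>OPT\<^sub>r\<close> come from shortcutting a
  feasible solution \<open>z\<close>: replacing two edges \<open>va, vb\<close> by the edge \<open>ab\<close> (or dropping a
  loop at \<open>v\<close>) lowers the degree of \<open>v\<close> by two and, by the triangle inequality, does
  not increase the cost. Shortcutting down to degrees \<open>2(r v - 1)\<close> yields a transportation
  solution, so \<open>c(P) \<le> c(OPT\<^sub>r)\<close>. Shortcutting down to degree 2 everywhere while keeping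
  the support connected yields a Hamiltonian cycle, so \<open>c(OPT\<^sub>1) \<le> c(OPT\<^sub>r)\<close>.
  Connectivity can be kept at a vertex of degree at least 4: after deleting one edge \<open>va\<close>,
  the vertices \<open>v\<close> and \<open>a\<close> are the only odd ones, hence still connected, and the second
  edge \<open>vb\<close> is chosen off such a \<open>v\<close>--\<open>a\<close> path.
\<close>

lemma finite_edges: "finite V \<Longrightarrow> finite (edges V)"
  unfolding edges_def by (rule finite_subset[of _ "Pow V"]) auto

lemma doubleton_in_edges: "p \<in> V \<Longrightarrow> q \<in> V \<Longrightarrow> {p, q} \<in> edges V"
  unfolding edges_def by auto

lemma deg_plus: "deg V (\<lambda>e. x e + y e) u = deg V x u + deg V y u"
  unfolding deg_def by (auto simp: sum.distrib[symmetric] distrib_left intro!: sum.cong)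

lemma cost_plus: "cost V c (\<lambda>e. x e + y e) = cost V c x + cost V c y"
  unfolding cost_def by (auto simp: sum.distrib[symmetric] distrib_left intro!: sum.cong)

lemma cost_nonneg: "metric_cost V c \<Longrightarrow> 0 \<le> cost V c x"
  unfolding cost_def metric_cost_def by (auto intro!: sum_nonneg)

lemma deg_eq_sum_neighbours:
  assumes "finite V" "s \<in> V"
  shows "deg V x s = (\<Sum>b\<in>V. (if b = s then 2 else 1) * x {s, b})"
proof -
  have inj: "inj_on (\<lambda>b. {s, b}) V"
    by (auto intro!: inj_onI simp: doubleton_eq_iff)
  have img: "(\<lambda>b. {s, b}) ` V = {e \<in> edges V. s \<in> e}"
    using assms(2) unfolding edges_def by blast
  have "deg V x s = (\<Sum>e\<in>{e \<in> edges V. s \<in> e}. (if e = {s} then 2 else 1) * x e)"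
    unfolding deg_def using finite_edges[OF assms(1)] by (simp add: sum.inter_filter)
  also have "\<dots> = (\<Sum>b\<in>V. (if {s, b} = {s} then 2 else 1) * x {s, b})"
    unfolding img[symmetric] by (simp add: sum.reindex[OF inj])
  finally show ?thesis by (simp add: doubleton_eq_iff eq_commute)
qed

lemma exists_other_neighbour:
  assumes "finite V" "s \<in> V" "p \<in> V" "x {s} = 0" "x {s, p} < deg V x s"
  shows "\<exists>b\<in>V. b \<noteq> s \<and> b \<noteq> p \<and> 0 < x {s, b}"
proof (rule ccontr)
  assume "\<not> ?thesis"
  then have "\<forall>b\<in>V. (if b = s then 2 else 1) * x {s, b} = (if b = p then x {s, p} else 0)"
    using assms(4) by auto
  then have "deg V x s = x {s, p}"
    using assms(1-3) by (simp add: deg_eq_sum_neighbours)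
  then show False using assms(5) by simp
qed

definition add_edge :: "('a set \<Rightarrow> nat) \<Rightarrow> 'a \<Rightarrow> 'a \<Rightarrow> 'a set \<Rightarrow> nat" where
  "add_edge x p q = x({p, q} := x {p, q} + 1)"

definition del_edge :: "('a set \<Rightarrow> nat) \<Rightarrow> 'a \<Rightarrow> 'a \<Rightarrow> 'a set \<Rightarrow> nat" where
  "del_edge x p q = x({p, q} := x {p, q} - 1)"

lemma add_edge_eq_plus: "add_edge x p q = (\<lambda>e. x e + (if e = {p, q} then 1 else 0))"
  unfolding add_edge_def by auto

lemma add_del_edge: "0 < x {p, q} \<Longrightarrow> add_edge (del_edge x p q) p q = x"
  unfolding add_edge_def del_edge_def by auto

lemma deg_add_edge:
  assumes "finite V" "p \<in> V" "q \<in> V"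
  shows "deg V (add_edge x p q) u = deg V x u + (if u = p then 1 else 0) + (if u = q then 1 else 0)"
proof -
  have "deg V (\<lambda>e. if e = {p, q} then 1 else 0) u
      = (\<Sum>e\<in>edges V. if e = {p, q} then (if u \<in> e then if e = {u} then 2 else 1 else 0) else 0)"
    unfolding deg_def by (auto intro!: sum.cong)
  also have "\<dots> = (if u \<in> {p, q} then if {p, q} = {u} then 2 else 1 else 0)"
    using assms by (simp add: finite_edges doubleton_in_edges)
  finally show ?thesis
    unfolding add_edge_eq_plus deg_plus by (auto simp: doubleton_eq_iff)
qed

lemma cost_add_edge:
  assumes "finite V" "p \<in> V" "q \<in> V"
  shows "cost V c (add_edge x p q) = cost V c x + c {p, q}"
proof -
  have "cost V c (\<lambda>e. if e = {p, q} then 1 else 0) = (\<Sum>e\<in>edges V. if e = {p, q} then c e else 0)"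
    unfolding cost_def by (auto intro!: sum.cong)
  also have "\<dots> = c {p, q}"
    using assms by (simp add: finite_edges doubleton_in_edges)
  finally show ?thesis
    unfolding add_edge_eq_plus cost_plus by simp
qed

lemma deg_del_edge:
  assumes "finite V" "p \<in> V" "q \<in> V" "0 < x {p, q}"
  shows "deg V (del_edge x p q) u + (if u = p then 1 else 0) + (if u = q then 1 else 0) = deg V x u"
  using deg_add_edge[OF assms(1-3), of "del_edge x p q" u] by (simp add: add_del_edge[of x p q, OF assms(4)])

lemma cost_del_edge:
  assumes "finite V" "p \<in> V" "q \<in> V" "0 < x {p, q}"
  shows "cost V c (del_edge x p q) + c {p, q} = cost V c x"
  using cost_add_edge[OF assms(1-3), of c "del_edge x p q"] by (simp add: add_del_edge[of x p q, OF assms(4)])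

definition shortcut :: "('a set \<Rightarrow> nat) \<Rightarrow> 'a \<Rightarrow> 'a \<Rightarrow> 'a \<Rightarrow> 'a set \<Rightarrow> nat" where
  "shortcut x v a b = add_edge (del_edge (del_edge x v a) v b) a b"

lemma deg_shortcut:
  assumes "finite V" "v \<in> V" "a \<in> V" "b \<in> V" "0 < x {v, a}" "0 < del_edge x v a {v, b}"
  shows "deg V (shortcut x v a b) u + (if u = v then 2 else 0) = deg V x u"
  using deg_del_edge[where x=x, OF assms(1,2,3,5), of u]
    deg_del_edge[where x="del_edge x v a", OF assms(1,2,4,6), of u]
    deg_add_edge[OF assms(1,3,4), of "del_edge (del_edge x v a) v b" u]
  unfolding shortcut_def by auto

lemma cost_shortcut_le:
  assumes "metric_cost V c" "finite V" "v \<in> V" "a \<in> V" "b \<in> V"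
    and "0 < x {v, a}" "0 < del_edge x v a {v, b}"
  shows "cost V c (shortcut x v a b) \<le> cost V c x"
proof -
  have "c {a, b} \<le> c {a, v} + c {v, b}"
    using assms(1,3-5) unfolding metric_cost_def by blast
  then show ?thesis
    using cost_del_edge[where x=x, OF assms(2,3,4,6), of c]
      cost_del_edge[where x="del_edge x v a", OF assms(2,3,5,7), of c]
      cost_add_edge[OF assms(2,4,5), of c "del_edge (del_edge x v a) v b"]
    unfolding shortcut_def by (simp add: insert_commute)
qed

lemma deg_del_loop:
  assumes "finite V" "v \<in> V" "0 < x {v}"
  shows "deg V (del_edge x v v) u + (if u = v then 2 else 0) = deg V x u"
  using deg_del_edge[where x=x, OF assms(1,2,2), of u] assms(3) by auto

lemma cost_del_loop_le:
  assumes "metric_cost V c" "finite V" "v \<in> V" "0 < x {v}"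
  shows "cost V c (del_edge x v v) \<le> cost V c x"
proof -
  have "0 \<le> c {v}"
    using assms(1,3) doubleton_in_edges[OF assms(3,3)] unfolding metric_cost_def by auto
  then show ?thesis using cost_del_edge[where x=x, OF assms(2,3,3), of c] assms(4) by simp
qed

definition supp_rel :: "'a set \<Rightarrow> ('a set \<Rightarrow> nat) \<Rightarrow> ('a \<times> 'a) set" where
  "supp_rel V x = {(a, b). a \<in> V \<and> b \<in> V \<and> 0 < x {a, b}}"

lemma supp_connected_iff: "supp_connected V x \<longleftrightarrow> (\<forall>u\<in>V. \<forall>v\<in>V. (u, v) \<in> (supp_rel V x)\<^sup>*)"
  unfolding supp_connected_def supp_rel_def by simp

lemma sym_rtrancl_supp_rel: "sym ((supp_rel V x)\<^sup>*)"
  by (rule sym_rtrancl) (auto simp: sym_def supp_rel_def insert_commute)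

lemma supp_connected_mono:
  assumes "supp_connected V x" "supp_rel V x \<subseteq> (supp_rel V y)\<^sup>*"
  shows "supp_connected V y"
  using assms rtrancl_subset_rtrancl unfolding supp_connected_iff by blast

lemma even_sum_deg_closed:
  assumes "finite V" "C \<subseteq> V" "\<forall>a\<in>C. \<forall>b\<in>V. 0 < x {a, b} \<longrightarrow> b \<in> C"
  shows "even (\<Sum>u\<in>C. deg V x u)"
proof -
  have "(\<Sum>u\<in>C. deg V x u) = (\<Sum>e\<in>edges V. \<Sum>u\<in>C. if u \<in> e then (if e = {u} then 2 else 1) * x e else 0)"
    unfolding deg_def by (rule sum.swap)
  also have "even \<dots>"
  proof (rule dvd_sum)
    fix e assume "e \<in> edges V"
    then obtain p q where e: "e = {p, q}" "p \<in> V" "q \<in> V" unfolding edges_def by auto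
    have fC: "finite C" using assms(1,2) finite_subset by auto
    show "even (\<Sum>u\<in>C. if u \<in> e then (if e = {u} then 2 else 1) * x e else 0)"
    proof (cases "x e = 0 \<or> p \<notin> C \<and> q \<notin> C")
      case True then show ?thesis using e by (subst sum.neutral) auto
    next
      case False
      then have "e \<subseteq> C" using assms(3) e by (auto simp: insert_commute)
      then have "C \<inter> e = e" by blast
      moreover have "(\<Sum>u\<in>C. if u \<in> e then (if e = {u} then 2 else 1) * x e else 0)
          = (\<Sum>u\<in>C \<inter> e. (if e = {u} then 2 else 1) * x e)"
        using fC by (simp add: sum.inter_restrict)
      ultimately show ?thesis using e by (cases "p = q") (auto simp: doubleton_eq_iff)
    qed
  qed
  finally show ?thesis .
qed

text \<open>The handshake lemma applied to the component of \<open>a\<close>.\<close>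
lemma exists_reachable_odd_deg:
  assumes "finite V" "a \<in> V" "odd (deg V x a)"
  shows "\<exists>w\<in>V. w \<noteq> a \<and> odd (deg V x w) \<and> (a, w) \<in> (supp_rel V x)\<^sup>*"
proof (rule ccontr)
  assume no_partner: "\<not> ?thesis"
  define C where "C = {w\<in>V. (a, w) \<in> (supp_rel V x)\<^sup>*}"
  have CV: "C \<subseteq> V" and aC: "a \<in> C" using assms(2) unfolding C_def by auto
  have "\<forall>w\<in>C. \<forall>b\<in>V. 0 < x {w, b} \<longrightarrow> b \<in> C"
    unfolding C_def supp_rel_def by (auto elim: rtrancl_into_rtrancl)
  then have "even (\<Sum>u\<in>C. deg V x u)" by (rule even_sum_deg_closed[OF assms(1) CV])
  moreover have "(\<Sum>u\<in>C. deg V x u) = deg V x a + (\<Sum>u\<in>C - {a}. deg V x u)"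
    using finite_subset[OF CV assms(1)] aC by (simp add: sum.remove)
  moreover have "even (\<Sum>u\<in>C - {a}. deg V x u)"
    by (rule dvd_sum) (use no_partner in \<open>auto simp: C_def\<close>)
  ultimately show False using assms(3) by auto
qed

lemma odd_deg_pair_connected:
  assumes "finite V" "a \<in> V" "odd (deg V x a)"
    and "\<forall>w\<in>V. w \<noteq> a \<longrightarrow> w \<noteq> b \<longrightarrow> even (deg V x w)"
  shows "(a, b) \<in> (supp_rel V x)\<^sup>*"
  using exists_reachable_odd_deg[OF assms(1-3)] assms(4) by blast

lemma rtrancl_first_step:
  assumes "(v, a) \<in> r\<^sup>*"
  shows "a = v \<or> (\<exists>p. (v, p) \<in> r \<and> (p, a) \<in> (Restr r (- {v}))\<^sup>*)"
  using assms
proof (induction rule: rtrancl_induct)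
  case (step w w')
  show ?case
  proof (cases "w = v \<or> w' = v")
    case True then show ?thesis using step.hyps(2) by auto
  next
    case False
    with step.IH obtain p where "(v, p) \<in> r" "(p, w) \<in> (Restr r (- {v}))\<^sup>*" by auto
    moreover have "(w, w') \<in> Restr r (- {v})" using step.hyps(2) False by auto
    ultimately show ?thesis by (meson rtrancl_into_rtrancl)
  qed
qed simp

lemma supp_connected_del_loop:
  assumes "supp_connected V x"
  shows "supp_connected V (del_edge x v v)"
proof (rule supp_connected_mono[OF assms], safe)
  fix p q assume "(p, q) \<in> supp_rel V x"
  then show "(p, q) \<in> (supp_rel V (del_edge x v v))\<^sup>*"
    by (cases "{p, q} = {v}") (auto simp: supp_rel_def del_edge_def doubleton_eq_iff)
qed

lemma supp_connected_shortcut: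
  fixes x :: "'a set \<Rightarrow> nat" and v a b :: 'a
  defines "y \<equiv> del_edge (del_edge x v a) v b"
  assumes "supp_connected V x" "(v, a) \<in> (supp_rel V y)\<^sup>*" "(a, b) \<in> (supp_rel V y)\<^sup>*"
  shows "supp_connected V (shortcut x v a b)"
proof (rule supp_connected_mono[OF assms(2)], safe)
  have y_sub: "(supp_rel V y)\<^sup>* \<subseteq> (supp_rel V (shortcut x v a b))\<^sup>*"
    by (rule rtrancl_mono) (auto simp: supp_rel_def shortcut_def add_edge_def y_def)
  have "(v, b) \<in> (supp_rel V y)\<^sup>*" using assms(3,4) by (rule rtrancl_trans)
  then have removed: "(p, q) \<in> (supp_rel V y)\<^sup>*" if "{p, q} = {v, a} \<or> {p, q} = {v, b}" for p q
    using that assms(3) sym_rtrancl_supp_rel[of V y] by (auto simp: doubleton_eq_iff dest: symD)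
  fix p q assume pq: "(p, q) \<in> supp_rel V x"
  show "(p, q) \<in> (supp_rel V (shortcut x v a b))\<^sup>*"
  proof (cases "{p, q} = {v, a} \<or> {p, q} = {v, b}")
    case True then show ?thesis using removed y_sub by blast
  next
    case False
    then have "(p, q) \<in> supp_rel V y" using pq by (auto simp: supp_rel_def y_def del_edge_def)
    then show ?thesis using y_sub by blast
  qed
qed

lemma exists_edge_del_keeps_reachable:
  assumes "finite V" "v \<in> V" "x {v} = 0" "2 \<le> deg V x v"
    and "(v, a) \<in> (supp_rel V x)\<^sup>*" "a \<noteq> v"
  obtains b where "b \<in> V" "b \<noteq> v" "0 < x {v, b}" "(v, a) \<in> (supp_rel V (del_edge x v b))\<^sup>*"
proof -
  obtain p where vp: "(v, p) \<in> supp_rel V x"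
    and pa: "(p, a) \<in> (Restr (supp_rel V x) (- {v}))\<^sup>*"
    using rtrancl_first_step[OF assms(5)] assms(6) by blast
  have p: "p \<in> V" "p \<noteq> v" "0 < x {v, p}" using vp assms(3) by (auto simp: supp_rel_def)
  obtain b where b: "b \<in> V" "b \<noteq> v" "0 < x {v, b}" "0 < del_edge x v b {v, p}"
  proof (cases "2 \<le> x {v, p}")
    case True then show ?thesis using that[of p] p by (simp add: del_edge_def)
  next
    case False
    then obtain b where "b \<in> V" "b \<noteq> v" "b \<noteq> p" "0 < x {v, b}"
      using exists_other_neighbour[where x=x, OF assms(1,2) p(1) assms(3)] assms(4) by fastforce
    then show ?thesis using that[of b] p by (simp add: del_edge_def doubleton_eq_iff)
  qed
  have "Restr (supp_rel V x) (- {v}) \<subseteq> supp_rel V (del_edge x v b)"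
    by (auto simp: supp_rel_def del_edge_def doubleton_eq_iff)
  then have "(p, a) \<in> (supp_rel V (del_edge x v b))\<^sup>*" using pa rtrancl_mono by blast
  moreover have "(v, p) \<in> supp_rel V (del_edge x v b)" using b(4) assms(2) p(1) by (simp add: supp_rel_def)
  ultimately show ?thesis using that b(1-3) by (meson converse_rtrancl_into_rtrancl)
qed

lemma exists_shortcut:
  assumes "metric_cost V c" "finite V" "v \<in> V" "2 \<le> deg V x v"
  shows "\<exists>y. (\<forall>u. deg V y u + (if u = v then 2 else 0) = deg V x u) \<and> cost V c y \<le> cost V c x"
proof (cases "0 < x {v}")
  case True
  then show ?thesis using deg_del_loop[where x=x, OF assms(2,3) True] cost_del_loop_le[where x=x, OF assms(1-3) True] by blast
next
  case False
  then have no_loop: "x {v} = 0" by simp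
  obtain a where a: "a \<in> V" "a \<noteq> v" "0 < x {v, a}"
    using exists_other_neighbour[where x=x, OF assms(2,3,3) no_loop] assms(4) no_loop by auto
  define x1 where "x1 = del_edge x v a"
  have deg1: "deg V x1 u + (if u = v then 1 else 0) + (if u = a then 1 else 0) = deg V x u" for u
    unfolding x1_def by (rule deg_del_edge[where x=x, OF assms(2,3) a(1,3)])
  have "x1 {v} = 0" using no_loop a(2) by (auto simp: x1_def del_edge_def doubleton_eq_iff)
  moreover have "x1 {v, v} < deg V x1 v" using deg1[of v] a(2) assms(4) calculation by simp
  ultimately obtain b where b: "b \<in> V" "0 < x1 {v, b}"
    using exists_other_neighbour[where x=x1, OF assms(2,3,3)] by blast
  show ?thesis
    using deg_shortcut[where x=x, OF assms(2,3) a(1) b(1) a(3)] cost_shortcut_le[where x=x, OF assms(1-3) a(1) b(1) a(3)] b(2)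
    unfolding x1_def by blast
qed

lemma exists_connected_shortcut:
  assumes "metric_cost V c" "finite V" "v \<in> V" "4 \<le> deg V x v"
    and "supp_connected V x" "\<forall>u\<in>V. even (deg V x u)"
  shows "\<exists>y. supp_connected V y \<and> (\<forall>u. deg V y u + (if u = v then 2 else 0) = deg V x u)
    \<and> cost V c y \<le> cost V c x"
proof (cases "0 < x {v}")
  case True
  then show ?thesis
    using supp_connected_del_loop[OF assms(5)] deg_del_loop[where x=x, OF assms(2,3) True]
      cost_del_loop_le[where x=x, OF assms(1-3) True] by blast
next
  case False
  then have no_loop: "x {v} = 0" by simp
  obtain a where a: "a \<in> V" "a \<noteq> v" "0 < x {v, a}"
    using exists_other_neighbour[where x=x, OF assms(2,3,3) no_loop] assms(4) no_loop by auto
  define x1 where "x1 = del_edge x v a"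
  have deg1: "deg V x1 u + (if u = v then 1 else 0) + (if u = a then 1 else 0) = deg V x u" for u
    unfolding x1_def by (rule deg_del_edge[where x=x, OF assms(2,3) a(1,3)])
  have "(a, v) \<in> (supp_rel V x1)\<^sup>*"
  proof (rule odd_deg_pair_connected[OF assms(2) a(1)])
    have "even (deg V x1 a + 1)" using deg1[of a] assms(6) a(1,2) by simp
    then show "odd (deg V x1 a)" by simp
    show "\<forall>w\<in>V. w \<noteq> a \<longrightarrow> w \<noteq> v \<longrightarrow> even (deg V x1 w)"
    proof (intro ballI impI)
      fix w assume "w \<in> V" "w \<noteq> a" "w \<noteq> v"
      with deg1[of w] assms(6) show "even (deg V x1 w)" by simp
    qed
  qed
  then have va: "(v, a) \<in> (supp_rel V x1)\<^sup>*" by (rule symD[OF sym_rtrancl_supp_rel])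
  have "x1 {v} = 0" using no_loop a(2) by (auto simp: x1_def del_edge_def doubleton_eq_iff)
  moreover have "2 \<le> deg V x1 v" using deg1[of v] a(2) assms(4) by simp
  ultimately obtain b where b: "b \<in> V" "b \<noteq> v" "0 < x1 {v, b}"
    and va': "(v, a) \<in> (supp_rel V (del_edge x1 v b))\<^sup>*"
    using exists_edge_del_keeps_reachable[OF assms(2,3) _ _ va a(2)] by blast
  have deg0: "deg V (del_edge x1 v b) u + (if u = v then 2 else 0) + (if u = a then 1 else 0)
      + (if u = b then 1 else 0) = deg V x u" for u
    using deg_del_edge[where x=x1, OF assms(2,3) b(1,3), of u] deg1[of u] by auto
  have "(a, b) \<in> (supp_rel V (del_edge x1 v b))\<^sup>*"
  proof (cases "a = b")
    case False
    show ?thesis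
    proof (rule odd_deg_pair_connected[OF assms(2) a(1)])
      have "even (deg V (del_edge x1 v b) a + 1)" using deg0[of a] assms(6) a(1,2) False by simp
      then show "odd (deg V (del_edge x1 v b) a)" by simp
      show "\<forall>w\<in>V. w \<noteq> a \<longrightarrow> w \<noteq> b \<longrightarrow> even (deg V (del_edge x1 v b) w)"
      proof (intro ballI impI)
        fix w assume "w \<in> V" "w \<noteq> a" "w \<noteq> b"
        with deg0[of w] assms(6) have "even (deg V (del_edge x1 v b) w + (if w = v then 2 else 0))"
          by simp
        then show "even (deg V (del_edge x1 v b) w)" by (simp split: if_splits)
      qed
    qed
  qed simp
  then have "supp_connected V (shortcut x v a b)"
    using supp_connected_shortcut[OF assms(5) va'[unfolded x1_def]] unfolding x1_def by blast
  then show ?thesis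
    using deg_shortcut[where x=x, OF assms(2,3) a(1) b(1) a(3)] cost_shortcut_le[where x=x, OF assms(1-3) a(1) b(1) a(3)] b(3)
    unfolding x1_def by blast
qed

lemma sum_deg_less:
  assumes "finite V" "v \<in> V" "\<forall>u. deg V y u + (if u = v then 2 else 0) = deg V x u"
  shows "(\<Sum>u\<in>V. deg V y u) < (\<Sum>u\<in>V. deg V x u)"
proof (rule sum_strict_mono_ex1[OF assms(1)])
  show "\<forall>u\<in>V. deg V y u \<le> deg V x u" using assms(3) by (metis le_add1)
  show "\<exists>u\<in>V. deg V y u < deg V x u" using assms(2) assms(3)[rule_format, of v] by (intro bexI[of _ v]) auto
qed

lemma exists_transport_solution_le:
  assumes "metric_cost V c" "finite V" "\<forall>u\<in>V. 2 * q u \<le> deg V x u \<and> even (deg V x u)"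
  shows "\<exists>Q. (\<forall>u\<in>V. deg V Q u = 2 * q u) \<and> cost V c Q \<le> cost V c x"
  using assms(3)
proof (induction "\<Sum>u\<in>V. deg V x u" arbitrary: x rule: less_induct)
  case less
  show ?case
  proof (cases "\<forall>u\<in>V. deg V x u = 2 * q u")
    case False
    then obtain v where "v \<in> V" "deg V x v \<noteq> 2 * q v" by blast
    with less.prems have v: "v \<in> V" "2 * q v + 2 \<le> deg V x v" by (auto elim!: evenE)
    then obtain y where y: "\<forall>u. deg V y u + (if u = v then 2 else 0) = deg V x u" "cost V c y \<le> cost V c x"
      using exists_shortcut[where x=x, OF assms(1,2) v(1)] by auto
    have "\<forall>u\<in>V. 2 * q u \<le> deg V y u \<and> even (deg V y u)"
    proof
      fix u assume "u \<in> V"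
      then show "2 * q u \<le> deg V y u \<and> even (deg V y u)"
        using y(1)[rule_format, of u, symmetric] bspec[OF less.prems \<open>u \<in> V\<close>] v(2) by (cases "u = v") auto
    qed
    then obtain Q where "\<forall>u\<in>V. deg V Q u = 2 * q u" "cost V c Q \<le> cost V c y"
      using less.hyps[OF sum_deg_less[OF assms(2) v(1) y(1)]] by blast
    with y(2) show ?thesis by force
  qed blast
qed

lemma exists_tour_le:
  assumes "metric_cost V c" "finite V" "supp_connected V x"
    and "\<forall>u\<in>V. 2 \<le> deg V x u \<and> even (deg V x u)"
  shows "\<exists>H. tsp_tour V H \<and> cost V c H \<le> cost V c x"
  using assms(3,4)
proof (induction "\<Sum>u\<in>V. deg V x u" arbitrary: x rule: less_induct)
  case less
  show ?case
  proof (cases "\<forall>u\<in>V. deg V x u = 2")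
    case True
    then have "tsp_tour V x" using less.prems(1) unfolding tsp_tour_def mvtsp_feasible_def by simp
    then show ?thesis by blast
  next
    case False
    then obtain v where "v \<in> V" "deg V x v \<noteq> 2" by blast
    with less.prems(2) have v: "v \<in> V" "4 \<le> deg V x v" by (auto elim!: evenE)
    then obtain y where y: "supp_connected V y" "\<forall>u. deg V y u + (if u = v then 2 else 0) = deg V x u"
      "cost V c y \<le> cost V c x"
      using exists_connected_shortcut[OF assms(1,2) v less.prems(1)] less.prems(2) by blast
    have "\<forall>u\<in>V. 2 \<le> deg V y u \<and> even (deg V y u)"
    proof
      fix u assume "u \<in> V"
      then show "2 \<le> deg V y u \<and> even (deg V y u)"
        using y(2)[rule_format, of u, symmetric] bspec[OF less.prems(2) \<open>u \<in> V\<close>] v(2) by (cases "u = v") auto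
    qed
    then obtain H where "tsp_tour V H" "cost V c H \<le> cost V c y"
      using less.hyps[OF sum_deg_less[OF assms(2) v(1) y(2)] y(1)] by blast
    with y(3) show ?thesis by force
  qed
qed

lemma mvtsp_opt_le:
  assumes "metric_cost V c" "mvtsp_feasible V r z"
  shows "mvtsp_opt V c r \<le> cost V c z"
  unfolding mvtsp_opt_def
  by (rule cInf_lower) (use assms cost_nonneg in \<open>auto simp: bdd_below_def\<close>)

lemma le_mvtsp_opt:
  assumes "mvtsp_feasible V r z" "\<And>z. mvtsp_feasible V r z \<Longrightarrow> t \<le> cost V c z"
  shows "t \<le> mvtsp_opt V c r"
  unfolding mvtsp_opt_def by (rule cInf_greatest) (use assms in auto)

lemma mvtsp_feasible_tour_plus:
  assumes "tsp_tour V T" "\<forall>v\<in>V. deg V P v = 2 * (r v - 1)" "\<forall>v\<in>V. 1 \<le> r v"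
  shows "mvtsp_feasible V r (\<lambda>e. T e + P e)"
  unfolding mvtsp_feasible_def
proof
  show "\<forall>v\<in>V. deg V (\<lambda>e. T e + P e) v = 2 * r v"
    using assms unfolding tsp_tour_def mvtsp_feasible_def by (auto simp: deg_plus)
  show "supp_connected V (\<lambda>e. T e + P e)"
    by (rule supp_connected_mono[where x=T]) (use assms(1) in \<open>auto simp: tsp_tour_def mvtsp_feasible_def supp_rel_def\<close>)
qed

lemma tsp_opt_le_mvtsp_opt:
  assumes "metric_cost V c" "finite V" "\<forall>v\<in>V. 1 \<le> r v" "mvtsp_feasible V r z"
  shows "mvtsp_opt V c (\<lambda>_. 1) \<le> mvtsp_opt V c r"
proof (rule le_mvtsp_opt[OF assms(4)])
  fix z assume "mvtsp_feasible V r z"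
  then obtain H where "tsp_tour V H" "cost V c H \<le> cost V c z"
    using exists_tour_le[OF assms(1,2), of z] assms(3) unfolding mvtsp_feasible_def by force
  then show "mvtsp_opt V c (\<lambda>_. 1) \<le> cost V c z"
    using mvtsp_opt_le[OF assms(1)] unfolding tsp_tour_def by force
qed

lemma transport_opt_le_mvtsp_opt:
  assumes "metric_cost V c" "finite V" "\<forall>v\<in>V. 1 \<le> r v" "mvtsp_feasible V r z"
    and "transport_opt V c (\<lambda>v. r v - 1) P"
  shows "cost V c P \<le> mvtsp_opt V c r"
proof (rule le_mvtsp_opt[OF assms(4)])
  fix z assume "mvtsp_feasible V r z"
  then obtain Q where "\<forall>v\<in>V. deg V Q v = 2 * (r v - 1)" "cost V c Q \<le> cost V c z"
    using exists_transport_solution_le[OF assms(1,2), of "\<lambda>v. r v - 1" z]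
    unfolding mvtsp_feasible_def by auto
  then show "cost V c P \<le> cost V c z"
    using assms(5) unfolding transport_opt_def by force
qed

theorem theorem5:
  fixes V :: "'a set" and c :: "'a set \<Rightarrow> real" and r :: "'a \<Rightarrow> nat"
    and \<alpha> :: real and T1 P :: "'a set \<Rightarrow> nat"
  assumes "finite V" and "V \<noteq> {}"
    and "metric_cost V c"
    and "\<forall>v\<in>V. r v \<ge> 1"
    and "\<alpha> \<ge> 1"
    and "tsp_tour V T1"
    and "cost V c T1 \<le> \<alpha> * mvtsp_opt V c (\<lambda>_. 1)"
    and "transport_opt V c (\<lambda>v. r v - 1) P"
  shows "mvtsp_feasible V r (\<lambda>e. T1 e + P e)
         \<and> cost V c (\<lambda>e. T1 e + P e) \<le> (\<alpha> + 1) * mvtsp_opt V c r"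
proof
  show feasible: "mvtsp_feasible V r (\<lambda>e. T1 e + P e)"
    using mvtsp_feasible_tour_plus[OF assms(6) _ assms(4)] assms(8) unfolding transport_opt_def by blast
  have "cost V c T1 \<le> \<alpha> * mvtsp_opt V c (\<lambda>_. 1)" by (rule assms(7))
  also have "\<dots> \<le> \<alpha> * mvtsp_opt V c r"
    using tsp_opt_le_mvtsp_opt[OF assms(3,1,4) feasible] assms(5) by (simp add: mult_left_mono)
  moreover have "cost V c P \<le> mvtsp_opt V c r"
    by (rule transport_opt_le_mvtsp_opt[OF assms(3,1,4) feasible assms(8)])
  ultimately show "cost V c (\<lambda>e. T1 e + P e) \<le> (\<alpha> + 1) * mvtsp_opt V c r"
    by (simp add: cost_plus distrib_right)
qed

end
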